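(* Let $S$ be a nonempty complete lattice and let $F:S\to 2^S$ be a lower V-ascending correspondence. Suppose that for every $x\in S$, the value $F(x)$ has a least element. Then $F$ has a least fixed point, i.e. the set $\{s\in S:s\in F(s)\}$ is nonempty and has a least element.
   Context: A poset $S$ is a complete lattice if every nonempty subset has a supremum and infimum in $S$. A correspondence $F:S\to 2^S$ on a lattice $S$ is lower V-ascending if for all $x<x'$ in $S$ (strict inequality), every $y\in F(x)$ and every $y'\in F(x')$, one has $y\wedge y'\in F(x)$. *)

theory Defs
  imports Main
begin

definition lower_V_ascending :: "('a::lattice \<Rightarrow> 'a set) \<Rightarrow> bool" where
  "lower_V_ascending F \<longleftrightarrow>
     (\<forall>x x'. x < x' \<longrightarrow> (\<forall>y\<in>F x. \<forall>y'\<in>F x'. inf y y' \<in> F x))"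

definition has_least :: "'a::order set \<Rightarrow> bool" where
  "has_least A \<longleftrightarrow> (\<exists>m\<in>A. \<forall>y\<in>A. m \<le> y)"

end

theory Submission
  imports Defs
begin

text \<open>Selecting the least element of each value turns F into a map f. Lower V-ascendance
  makes f monotone: for x < x', the meet of f x and f x' lies in F x, so f x is below it.
  By Knaster-Tarski f has a least fixed point, which is a fixed point of F; and every
  fixed point s of F satisfies f s \<le> s, hence lies above lfp f.\<close>

lemma has_least_LeastI:
  assumes "has_least A"
  shows "(LEAST x. x \<in> A) \<in> A"
proof -
  from assms obtain m where "m \<in> A" "\<forall>y\<in>A. m \<le> y"
    unfolding has_least_def by blast
  then show ?thesis by (simp add: Least_equality)
qed

lemma has_least_Least_le:
  assumes "has_least A" and "y \<in> A"
  shows "(LEAST x. x \<in> A) \<le> y"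
proof -
  from assms(1) obtain m where "m \<in> A" "\<forall>y\<in>A. m \<le> y"
    unfolding has_least_def by blast
  with assms(2) show ?thesis by (simp add: Least_equality)
qed

lemma mono_Least_of_lower_V_ascending:
  fixes F :: "'a::lattice \<Rightarrow> 'a set"
  assumes asc: "lower_V_ascending F"
    and least: "\<And>x. has_least (F x)"
  shows "mono (\<lambda>x. LEAST y. y \<in> F x)"
proof (rule monoI)
  fix x x' :: 'a
  assume "x \<le> x'"
  let ?f = "\<lambda>x. LEAST y. y \<in> F x"
  show "?f x \<le> ?f x'"
  proof (cases "x = x'")
    case False
    with \<open>x \<le> x'\<close> have "x < x'" by simp
    with asc have "inf (?f x) (?f x') \<in> F x"
      unfolding lower_V_ascending_def using has_least_LeastI least by blast
    then have "?f x \<le> inf (?f x) (?f x')"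
      using has_least_Least_le least by blast
    then show ?thesis by simp
  qed simp
qed

theorem lemma2p10:
  fixes F :: "'a::complete_lattice \<Rightarrow> 'a set"
  assumes "lower_V_ascending F"
    and "\<And>x. has_least (F x)"
  shows "{s. s \<in> F s} \<noteq> {} \<and> has_least {s. s \<in> F s}"
proof -
  define f where "f x = (LEAST y. y \<in> F x)" for x
  have "mono f"
    unfolding f_def using mono_Least_of_lower_V_ascending assms by blast
  then have "lfp f = f (lfp f)"
    by (rule lfp_unfold)
  then have fixed: "lfp f \<in> F (lfp f)"
    unfolding f_def using has_least_LeastI assms(2) by metis
  have below: "lfp f \<le> s" if "s \<in> F s" for s
  proof (rule lfp_lowerbound)
    show "f s \<le> s"
      unfolding f_def using has_least_Least_le[OF assms(2) that] .
  qed
  show ?thesis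
    unfolding has_least_def using fixed below by blast
qed

end
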